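(* Assume the setting below and that the running variable $X$ has a strictly positive density at the cutoff $0$. Let $v(x,w):=(w,\,1-w,\,xw,\,x(1-w),\,x^2)^\top$ and $A:=\mathbb{E}[v(X,W)v(X,W)^\top]$. Then there exists $\alpha\in(0,1]$ such that $u^\top A u\ge \alpha\|u\|_2^2$ for all $u\in\mathbb{R}^5$. Furthermore, for fixed $\sigma^2>0$, $B>0$, letting $\theta_n^*=(\rho_n^*,\lambda_n^* )$ be the minimizer of $L_n(\cdot\,;\sigma^2,B)$ over $\Theta(\ell)$, every $\theta=(\rho,\lambda)\in\Theta(\ell)$ satisfies $$L_n(\theta;\sigma^2,B)-L_n(\theta_n^*;\sigma^2,B)\ge\frac{1}{4\sigma^2}\mathbb{E}\big(\rho(X)-\rho_n^*(X)+\langle \lambda_{-1}-\lambda_{n,-1}^*,v(X,W)\rangle\big)^2+\frac{(\lambda_1-\lambda_{n,1}^* )^2}{4nB^2}$$ $$\ge \frac{\alpha}{4\sigma^2}\Big(\|\rho-\rho_n^*\|^2_{L^2(P)}+\|\lambda_{-1}-\lambda_{n,-1}^*\|_2^2\Big)+\frac{(\lambda_1-\lambda_{n,1}^* )^2}{4nB^2}-R_n,$$ where $R_n=\frac{1}{2\sigma^2}\mathbb{E}\big|(\rho(X)-\rho_n^*(X))\langle \lambda_{-1}-\lambda_{n,-1}^*,v(X,W)\rangle\big|$ and $P$ is the law of $X$.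
   Context: Regression discontinuity setting with cutoff normalized to $c=0$: i.i.d. pairs $(X_i,Y_i)$, $W_i=\mathbf{1}\{X_i\ge 0\}$; only observations with $|X_i|\le\ell$ are used, and $(X,W)$ denotes a generic draw of a retained running variable and its treatment indicator. For $\lambda=(\lambda_1,\dots,\lambda_6)$ write $\lambda_{-1}=(\lambda_2,\dots,\lambda_6)$. Dual parameter space: $\Theta(\ell)=\{(f,\lambda): f:[-\ell,\ell]\to\mathbb{R},\ f(0)=f'(0)=f''(0)=0,\ f''\text{ is }\lambda_1\text{-Lipschitz},\ \lambda\in[0,\infty)\times\mathbb{R}^5\}$. For $\theta=(\rho,\lambda)$ let $G(\theta;x,w)=\rho(x)+\lambda_2 w+\lambda_3(1-w)+\lambda_4 wx+\lambda_5(1-w)x+\lambda_6x^2$. Population dual loss: $L_n(\theta;\sigma^2,B)=\frac{1}{4\sigma^2}\mathbb{E}[G^2(\theta;X,W)]+\frac{\lambda_1^2}{4nB^2}+\frac{\lambda_2-\lambda_3}{n}$. *)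

theory Defs
  imports "HOL-Analysis.Analysis" "HOL-Probability.Probability"
begin

text \<open>Treatment indicator W = 1{X >= 0} (cutoff normalised to 0).\<close>
definition treat :: "real \<Rightarrow> real" where
  "treat x = (if x \<ge> 0 then 1 else 0)"

definition vfeat :: "real \<Rightarrow> real ^ 5" where
  "vfeat x = vector [treat x, 1 - treat x, x * treat x, x * (1 - treat x), x^2]"

definition Amat :: "real measure \<Rightarrow> real ^ 5 ^ 5" where
  "Amat M = (\<chi> i j. \<integral>x. vfeat x $ i * vfeat x $ j \<partial>M)"

text \<open>Dual parameters theta = (rho, lambda_1, lambda_{-1}), with
  lambda_{-1} = (lambda_2,...,lambda_6) stored as a vector in R^5.
  A function rho : [-l,l] -> R is represented extensionally (value 0 outside [-l,l]).\<close>
type_synonym dualpar = "(real \<Rightarrow> real) \<times> real \<times> (real ^ 5)"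

definition Theta :: "real \<Rightarrow> dualpar set" where
  "Theta l = {(\<rho>, lam1, \<mu>).
     (\<forall>x. x \<notin> {-l..l} \<longrightarrow> \<rho> x = 0) \<and>
     (\<exists>\<rho>1 \<rho>2. (\<forall>x\<in>{-l..l}. (\<rho> has_real_derivative \<rho>1 x) (at x within {-l..l}) \<and>
                             (\<rho>1 has_real_derivative \<rho>2 x) (at x within {-l..l})) \<and>
               \<rho> 0 = 0 \<and> \<rho>1 0 = 0 \<and> \<rho>2 0 = 0 \<and>
               lam1-lipschitz_on {-l..l} \<rho>2) \<and>
     lam1 \<ge> 0}"

definition Gfun :: "dualpar \<Rightarrow> real \<Rightarrow> real" where
  "Gfun \<theta> x = fst \<theta> x + snd (snd \<theta>) \<bullet> vfeat x"

definition Lloss :: "real measure \<Rightarrow> nat \<Rightarrow> real \<Rightarrow> real \<Rightarrow> dualpar \<Rightarrow> real" where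
  "Lloss M n s2 B \<theta> =
     1 / (4 * s2) * (\<integral>x. (Gfun \<theta> x)^2 \<partial>M)
     + (fst (snd \<theta>))^2 / (4 * real n * B^2)
     + (snd (snd \<theta>) $ 1 - snd (snd \<theta>) $ 2) / real n"

end

theory Submission
  imports Defs
begin

text \<open>For \<open>x > 0\<close> the feature vector is \<open>(1, 0, x, 0, x\<^sup>2)\<close> and for \<open>x < 0\<close> it is
  \<open>(0, 1, 0, x, x\<^sup>2)\<close>, so \<open>u\<^sup>T A u\<close> is bounded below by \<open>c\<close> times the integrals of
  \<open>(u\<^sub>1 + u\<^sub>3 x + u\<^sub>5 x\<^sup>2)\<^sup>2\<close> over \<open>[0, h]\<close> and of \<open>(u\<^sub>2 + u\<^sub>4 x + u\<^sub>5 x\<^sup>2)\<^sup>2\<close> over \<open>[-h, 0]\<close>,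
  where the density exceeds \<open>c\<close>. Each is a positive definite quadratic form (a rescaled
  Hilbert matrix) in three coordinates, and together they cover all five.

  Along the segment from the minimiser \<open>\<theta>\<^sup>*\<close> to \<open>\<theta>\<close> the loss is a quadratic polynomial
  \<open>L(\<theta>\<^sup>*) + t D + t\<^sup>2 Q\<close>, where \<open>Q\<close> is the first lower bound. The segment stays in the
  convex set \<open>\<Theta>(\<ell>)\<close>, so minimality forces \<open>D \<ge> 0\<close> and \<open>L(\<theta>) - L(\<theta>\<^sup>*) = D + Q \<ge> Q\<close>.
  Expanding the square in \<open>Q\<close> and applying coercivity of \<open>A\<close> to the \<open>\<lambda>\<close>-part gives the
  second bound.\<close>

lemma exhaust_5:
  fixes x :: 5
  shows "x = 1 \<or> x = 2 \<or> x = 3 \<or> x = 4 \<or> x = 5"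
proof (induct x)
  case (of_int z)
  then have "z = 0 \<or> z = 1 \<or> z = 2 \<or> z = 3 \<or> z = 4" by fastforce
  then show ?case by auto
qed

lemma UNIV_5: "UNIV = {1, 2, 3, 4, 5::5}"
  using exhaust_5 by auto

lemma sum_5: "sum f (UNIV::5 set) = f 1 + f 2 + f 3 + f 4 + f 5"
  unfolding UNIV_5 by (simp add: ac_simps)

lemma vector_5 [simp]:
  "(vector [a, b, c, d, e] :: ('a::zero)^5)$1 = a"
  "(vector [a, b, c, d, e] :: ('a::zero)^5)$2 = b"
  "(vector [a, b, c, d, e] :: ('a::zero)^5)$3 = c"
  "(vector [a, b, c, d, e] :: ('a::zero)^5)$4 = d"
  "(vector [a, b, c, d, e] :: ('a::zero)^5)$5 = e"
  unfolding vector_def by simp_all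

lemma norm_vec5_power2:
  "(norm (u :: real^5))^2 = (u$1)^2 + (u$2)^2 + (u$3)^2 + (u$4)^2 + (u$5)^2"
  unfolding power2_norm_eq_inner inner_vec_def sum_5 by (simp add: power2_eq_square)

lemma inner_vfeat:
  "u \<bullet> vfeat x = u$1 * treat x + u$2 * (1 - treat x) + u$3 * (x * treat x)
                 + u$4 * (x * (1 - treat x)) + u$5 * x^2"
  unfolding vfeat_def inner_vec_def sum_5 by simp

lemma inner_vfeat_pos: "0 \<le> x \<Longrightarrow> u \<bullet> vfeat x = u$1 + u$3 * x + u$5 * x^2"
  by (simp add: inner_vfeat treat_def)

lemma inner_vfeat_neg: "x < 0 \<Longrightarrow> u \<bullet> vfeat x = u$2 + u$4 * x + u$5 * x^2"
  by (simp add: inner_vfeat treat_def)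

lemma inner_Amat_eq_integral:
  assumes "\<And>i j. integrable M (\<lambda>x. vfeat x $ i * vfeat x $ j)"
  shows "u \<bullet> (Amat M *v u) = (\<integral>x. (u \<bullet> vfeat x)^2 \<partial>M)"
proof -
  have "(\<integral>x. (u \<bullet> vfeat x)^2 \<partial>M)
      = (\<integral>x. (\<Sum>i\<in>UNIV. \<Sum>j\<in>UNIV. u$i * u$j * (vfeat x $ i * vfeat x $ j)) \<partial>M)"
    by (rule Bochner_Integration.integral_cong)
       (simp_all add: inner_vec_def power2_eq_square sum_product mult_ac)
  also have "\<dots> = (\<Sum>i\<in>UNIV. \<Sum>j\<in>UNIV. u$i * u$j * (\<integral>x. vfeat x $ i * vfeat x $ j \<partial>M))"
    using assms by (simp add: integrable_sum)
  also have "\<dots> = u \<bullet> (Amat M *v u)"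
    by (simp add: inner_vec_def matrix_vector_mult_def Amat_def sum_distrib_left mult_ac)
  finally show ?thesis by simp
qed

lemma power2_sum3_le: "((a::real) + b + c)^2 \<le> 3 * (a^2 + b^2 + c^2)"
proof -
  have "3 * (a^2 + b^2 + c^2) - (a + b + c)^2 = (a - b)^2 + (b - c)^2 + (a - c)^2"
    by (simp add: power2_eq_square algebra_simps)
  then show ?thesis by (smt (verit) zero_le_power2)
qed

lemma power2_sum2_le: "((a::real) + b)^2 \<le> 2 * (a^2 + b^2)"
proof -
  have "2 * (a^2 + b^2) - (a + b)^2 = (a - b)^2"
    by (simp add: power2_eq_square algebra_simps)
  then show ?thesis by (smt (verit) zero_le_power2)
qed

text \<open>The left-hand side is \<open>\<integral>\<^sub>0\<^sup>1 (X + Y t + Z t\<^sup>2)\<^sup>2 dt\<close>, the quadratic form of the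
  \<open>3 \<times> 3\<close> Hilbert matrix; \<open>1/720\<close> is a crude bound on its least eigenvalue.\<close>
lemma hilbert_quadratic_form_ge:
  fixes X Y Z :: real
  shows "(X^2 + Y^2 + Z^2) / 720 \<le> X^2 + X*Y + (Y^2 + 2*X*Z)/3 + Y*Z/2 + Z^2/5"
proof -
  define P where "P = X + Y/2 + Z/3"
  define R where "R = Y + Z"
  have completed_squares: "X^2 + X*Y + (Y^2 + 2*X*Z)/3 + Y*Z/2 + Z^2/5 = P^2 + R^2/12 + Z^2/180"
    unfolding P_def R_def by (simp add: power2_eq_square field_simps)
  have "X^2 \<le> 3 * (P^2 + (-R/2)^2 + (Z/6)^2)"
    using power2_sum3_le[of P "-R/2" "Z/6"] unfolding P_def R_def by (simp add: field_simps)
  moreover have "Y^2 \<le> 2 * (R^2 + Z^2)"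
    using power2_sum2_le[of R "-Z"] unfolding R_def by simp
  ultimately have "X^2 + Y^2 + Z^2 \<le> 4 * (P^2 + R^2 + Z^2)"
    by (simp add: power_divide)
       (use zero_le_power2[of P] zero_le_power2[of R] zero_le_power2[of Z] in linarith)
  then show ?thesis
    unfolding completed_squares
    using zero_le_power2[of P] zero_le_power2[of R] zero_le_power2[of Z] by argo
qed

definition quadratic_square_primitive :: "real \<Rightarrow> real \<Rightarrow> real \<Rightarrow> real \<Rightarrow> real" where
  "quadratic_square_primitive a b e x =
     a^2*x + a*b*x^2 + (b^2 + 2*a*e)*x^3/3 + b*e*x^4/2 + e^2*x^5/5"

lemma integral_quadratic_square:
  fixes a b e lo hi :: real
  assumes "lo \<le> hi"
  shows "integral\<^sup>L lborel (\<lambda>x. indicator {lo..hi} x *\<^sub>R (a + b*x + e*x^2)^2)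
       = quadratic_square_primitive a b e hi - quadratic_square_primitive a b e lo"
proof (rule integral_FTC_atLeastAtMost[OF assms])
  fix x :: real
  have "(quadratic_square_primitive a b e has_real_derivative (a + b*x + e*x^2)^2) (at x)"
    unfolding quadratic_square_primitive_def
    by (auto intro!: derivative_eq_intros
             simp: power2_eq_square power3_eq_cube power4_eq_xxxx field_simps)
  then show "(quadratic_square_primitive a b e has_vector_derivative (a + b*x + e*x^2)^2)
      (at x within {lo..hi})"
    by (simp add: has_real_derivative_iff_has_vector_derivative has_vector_derivative_at_within)
qed (intro continuous_intros)

lemma integral_quadratic_square_right:
  assumes "0 \<le> h"
  shows "integral\<^sup>L lborel (\<lambda>x. indicator {0..h} x *\<^sub>R (a + b*x + e*x^2)^2)
     = quadratic_square_primitive a b e h"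
  by (simp only: integral_quadratic_square[OF assms]) (simp add: quadratic_square_primitive_def)

lemma integral_quadratic_square_left:
  assumes "0 \<le> h"
  shows "integral\<^sup>L lborel (\<lambda>x. indicator {-h..0} x *\<^sub>R (a + b*x + e*x^2)^2)
     = quadratic_square_primitive a (-b) e h"
proof -
  have "-h \<le> 0" using assms by simp
  then show ?thesis
    by (simp only: integral_quadratic_square)
       (simp add: quadratic_square_primitive_def power2_eq_square power3_eq_cube
          power4_eq_xxxx field_simps)
qed

text \<open>Substituting \<open>x = h t\<close> turns the primitive into \<open>h\<close> times the Hilbert form in
  \<open>(a, b h, e h\<^sup>2)\<close>.\<close>
lemma quadratic_square_primitive_ge:
  fixes a b e h :: real
  assumes h: "0 < h" "h \<le> 1"
  shows "h^5 / 720 * (a^2 + b^2 + e^2) \<le> quadratic_square_primitive a b e h"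
proof -
  have rescaled: "quadratic_square_primitive a b e h
      = h * (a^2 + a*(b*h) + ((b*h)^2 + 2*a*(e*h^2))/3 + (b*h)*(e*h^2)/2 + (e*h^2)^2/5)"
    unfolding quadratic_square_primitive_def
    by (simp add: power2_eq_square power3_eq_cube power4_eq_xxxx field_simps)
      (simp add: algebra_simps numeral_eq_Suc)
  have "h^4 * (a^2 + b^2 + e^2) \<le> a^2 + (b*h)^2 + (e*h^2)^2"
  proof -
    have "h^4 * a^2 \<le> a^2"
      using h by (simp add: power_le_one mult_left_le_one_le)
    moreover have "h^4 * b^2 \<le> (b*h)^2"
      using h power_decreasing[of 2 4 h]
      by (simp add: power_mult_distrib mult.commute mult_left_mono)
    moreover have "h^4 * e^2 \<le> (e*h^2)^2"
      by (simp add: power_mult_distrib power_mult[symmetric])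
    ultimately show ?thesis by (simp add: algebra_simps)
  qed
  then have "h * (h^4 * (a^2 + b^2 + e^2)) / 720 \<le> h * ((a^2 + (b*h)^2 + (e*h^2)^2) / 720)"
    using h by simp
  also have "\<dots> \<le> quadratic_square_primitive a b e h"
    unfolding rescaled using h by (intro mult_left_mono hilbert_quadratic_form_ge) auto
  finally show ?thesis by (simp add: eval_nat_numeral)
qed

text \<open>The point \<open>0\<close>, where the two pieces overlap and \<open>g\<close> may differ from both, is a
  null set.\<close>
lemma integral_density_ge_near_zero:
  fixes f g P Q :: "real \<Rightarrow> real"
  assumes f_meas: "f \<in> borel_measurable borel" and f_nonneg: "\<And>x. 0 \<le> f x"
    and g_meas: "g \<in> borel_measurable borel" and g_nonneg: "\<And>x. 0 \<le> g x"
    and g_int: "integrable (density lborel (\<lambda>x. ennreal (f x))) g"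
    and f_ge: "\<And>x. \<bar>x\<bar> \<le> h \<Longrightarrow> c \<le> f x"
    and P: "continuous_on {0..h} P" and gP: "\<And>x. 0 < x \<Longrightarrow> x \<le> h \<Longrightarrow> g x = P x"
    and Q: "continuous_on {-h..0} Q" and gQ: "\<And>x. -h \<le> x \<Longrightarrow> x < 0 \<Longrightarrow> g x = Q x"
  shows "c * (integral\<^sup>L lborel (\<lambda>x. indicator {0..h} x *\<^sub>R P x)
            + integral\<^sup>L lborel (\<lambda>x. indicator {-h..0} x *\<^sub>R Q x))
         \<le> integral\<^sup>L (density lborel (\<lambda>x. ennreal (f x))) g"
proof -
  define R where
    "R = (\<lambda>x. c * (indicator {0..h} x *\<^sub>R P x + indicator {-h..0} x *\<^sub>R Q x))"
  have P_int: "integrable lborel (\<lambda>x. indicator {0..h} x *\<^sub>R P x)"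
    using borel_integrable_atLeastAtMost'[OF P] unfolding set_integrable_def .
  have Q_int: "integrable lborel (\<lambda>x. indicator {-h..0} x *\<^sub>R Q x)"
    using borel_integrable_atLeastAtMost'[OF Q] unfolding set_integrable_def .
  have "R x \<le> f x * g x" if "x \<noteq> 0" for x
  proof -
    consider "0 < x" "x \<le> h" | "-h \<le> x" "x < 0" | "x \<notin> {-h..h}"
      using \<open>x \<noteq> 0\<close> by force
    then show ?thesis
    proof cases
      case 1
      then show ?thesis
        using f_ge[of x] gP[of x] g_nonneg[of x] by (simp add: R_def mult_right_mono)
    next
      case 2
      then show ?thesis
        using f_ge[of x] gQ[of x] g_nonneg[of x] by (simp add: R_def mult_right_mono)
    next
      case 3
      then show ?thesis
        using f_nonneg[of x] g_nonneg[of x] by (auto simp: R_def)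
    qed
  qed
  moreover have "integrable lborel R"
    unfolding R_def using P_int Q_int by simp
  moreover have "integrable lborel (\<lambda>x. f x *\<^sub>R g x)"
    using g_int f_meas f_nonneg g_meas by (subst (asm) integrable_density) auto
  ultimately have "integral\<^sup>L lborel R \<le> (\<integral>x. f x *\<^sub>R g x \<partial>lborel)"
    by (intro integral_mono_AE eventually_mono[OF AE_lborel_singleton[of 0]]) auto
  also have "\<dots> = integral\<^sup>L (density lborel (\<lambda>x. ennreal (f x))) g"
    using g_meas f_meas f_nonneg by (intro integral_density[symmetric]) auto
  finally show ?thesis
    using P_int Q_int by (simp add: R_def)
qed

definition bounded_borel_on :: "real \<Rightarrow> (real \<Rightarrow> real) \<Rightarrow> bool" where
  "bounded_borel_on l \<phi> \<longleftrightarrow>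
     \<phi> \<in> borel_measurable borel \<and> (\<exists>K. \<forall>x. \<bar>x\<bar> \<le> l \<longrightarrow> \<bar>\<phi> x\<bar> \<le> K)"

lemma bounded_borel_on_const: "bounded_borel_on l (\<lambda>x. c)"
  unfolding bounded_borel_on_def by auto

lemma bounded_borel_on_ident: "bounded_borel_on l (\<lambda>x. x)"
  unfolding bounded_borel_on_def by auto

lemma bounded_borel_on_treat: "bounded_borel_on l treat"
  unfolding bounded_borel_on_def treat_def by (intro conjI exI[of _ 1]) auto

lemma bounded_borel_on_add:
  assumes "bounded_borel_on l \<phi>" "bounded_borel_on l \<psi>"
  shows "bounded_borel_on l (\<lambda>x. \<phi> x + \<psi> x)"
proof -
  obtain K1 K2 where "\<forall>x. \<bar>x\<bar> \<le> l \<longrightarrow> \<bar>\<phi> x\<bar> \<le> K1" "\<forall>x. \<bar>x\<bar> \<le> l \<longrightarrow> \<bar>\<psi> x\<bar> \<le> K2"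
    using assms unfolding bounded_borel_on_def by blast
  then have "\<forall>x. \<bar>x\<bar> \<le> l \<longrightarrow> \<bar>\<phi> x + \<psi> x\<bar> \<le> K1 + K2"
    by (smt (verit))
  then show ?thesis using assms unfolding bounded_borel_on_def by auto
qed

lemma bounded_borel_on_mult:
  assumes "bounded_borel_on l \<phi>" "bounded_borel_on l \<psi>"
  shows "bounded_borel_on l (\<lambda>x. \<phi> x * \<psi> x)"
proof -
  obtain K1 K2 where "\<forall>x. \<bar>x\<bar> \<le> l \<longrightarrow> \<bar>\<phi> x\<bar> \<le> K1" "\<forall>x. \<bar>x\<bar> \<le> l \<longrightarrow> \<bar>\<psi> x\<bar> \<le> K2"
    using assms unfolding bounded_borel_on_def by blast
  then have "\<forall>x. \<bar>x\<bar> \<le> l \<longrightarrow> \<bar>\<phi> x * \<psi> x\<bar> \<le> K1 * K2"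
    unfolding abs_mult by (metis abs_ge_zero mult_mono order.trans)
  then show ?thesis using assms unfolding bounded_borel_on_def by auto
qed

lemma bounded_borel_on_diff:
  assumes "bounded_borel_on l \<phi>" "bounded_borel_on l \<psi>"
  shows "bounded_borel_on l (\<lambda>x. \<phi> x - \<psi> x)"
  using bounded_borel_on_add[OF assms(1) bounded_borel_on_mult[OF bounded_borel_on_const assms(2)],
      of "-1"]
  by simp

lemma bounded_borel_on_power2: "bounded_borel_on l \<phi> \<Longrightarrow> bounded_borel_on l (\<lambda>x. (\<phi> x)^2)"
  unfolding power2_eq_square by (rule bounded_borel_on_mult)

lemma bounded_borel_on_inner_vfeat: "bounded_borel_on l (\<lambda>x. u \<bullet> vfeat x)"
  unfolding inner_vfeat
  by (intro bounded_borel_on_add bounded_borel_on_mult bounded_borel_on_diff bounded_borel_on_power2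
      bounded_borel_on_const bounded_borel_on_ident bounded_borel_on_treat)

lemma bounded_borel_on_vfeat_nth: "bounded_borel_on l (\<lambda>x. vfeat x $ i)"
  using bounded_borel_on_inner_vfeat[of l "axis i 1"] by (simp add: inner_axis')

lemma integrable_bounded_borel_on:
  assumes "finite_measure M" "sets M = sets borel" "AE x in M. \<bar>x\<bar> \<le> l"
    and "bounded_borel_on l \<phi>"
  shows "integrable M \<phi>"
proof -
  interpret finite_measure M by (fact assms(1))
  obtain K where K: "\<forall>x. \<bar>x\<bar> \<le> l \<longrightarrow> \<bar>\<phi> x\<bar> \<le> K" and "\<phi> \<in> borel_measurable borel"
    using assms(4) unfolding bounded_borel_on_def by blast
  then have "\<phi> \<in> borel_measurable M"
    using measurable_cong_sets[OF assms(2) refl] by blast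
  moreover have "AE x in M. norm (\<phi> x) \<le> K"
    using assms(3) by eventually_elim (simp add: K)
  ultimately show ?thesis by (intro integrable_const_bound)
qed

lemma Amat_coercive:
  fixes f :: "real \<Rightarrow> real"
  assumes f_meas: "f \<in> borel_measurable borel" and f_nonneg: "\<And>x. 0 \<le> f x"
    and integrable: "\<And>\<phi>. bounded_borel_on l \<phi> \<Longrightarrow> integrable (density lborel (\<lambda>x. ennreal (f x))) \<phi>"
    and \<delta>: "0 < \<delta>" and c: "0 < c" and f_ge: "\<And>x. \<bar>x\<bar> < \<delta> \<Longrightarrow> c \<le> f x"
  shows "\<exists>\<alpha>>0. \<alpha> \<le> 1 \<and>
    (\<forall>u. \<alpha> * (norm u)^2 \<le> u \<bullet> (Amat (density lborel (\<lambda>x. ennreal (f x))) *v u))"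
proof -
  define M where "M = density lborel (\<lambda>x. ennreal (f x))"
  define h where "h = min (\<delta>/2) 1"
  have h: "0 < h" "h \<le> 1" "h < \<delta>" using \<delta> unfolding h_def by auto
  define \<alpha> where "\<alpha> = min 1 (c * h^5 / 720)"
  have \<alpha>: "0 < \<alpha>" "\<alpha> \<le> 1" "\<alpha> \<le> c * h^5 / 720" using h c unfolding \<alpha>_def by auto
  have "\<alpha> * (norm u)^2 \<le> u \<bullet> (Amat M *v u)" for u :: "real^5"
  proof -
    have "\<alpha> * (norm u)^2 \<le> c * h^5 / 720 * (norm u)^2"
      using \<alpha>(3) by (rule mult_right_mono) simp
    also have "\<dots> \<le> c * h^5 / 720 * (((u$1)^2 + (u$3)^2 + (u$5)^2) + ((u$2)^2 + (-u$4)^2 + (u$5)^2))"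
      unfolding norm_vec5_power2 using c h by (intro mult_left_mono) auto
    also have "\<dots> = c * (h^5 / 720 * ((u$1)^2 + (u$3)^2 + (u$5)^2)
                     + h^5 / 720 * ((u$2)^2 + (-u$4)^2 + (u$5)^2))"
      by (simp only: distrib_left mult.assoc times_divide_eq_right times_divide_eq_left)
    also have "\<dots> \<le> c * (quadratic_square_primitive (u$1) (u$3) (u$5) h
                     + quadratic_square_primitive (u$2) (-u$4) (u$5) h)"
      using c h by (intro mult_left_mono add_mono quadratic_square_primitive_ge) auto
    also have "\<dots> = c * (integral\<^sup>L lborel (\<lambda>x. indicator {0..h} x *\<^sub>R (u$1 + u$3*x + u$5*x^2)^2)
                     + integral\<^sup>L lborel (\<lambda>x. indicator {-h..0} x *\<^sub>R (u$2 + u$4*x + u$5*x^2)^2))"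
      using h by (simp only: integral_quadratic_square_right integral_quadratic_square_left
          less_imp_le)
    also have "\<dots> \<le> (\<integral>x. (u \<bullet> vfeat x)^2 \<partial>M)"
      unfolding M_def
    proof (rule integral_density_ge_near_zero[OF f_meas f_nonneg])
      show "(\<lambda>x. (u \<bullet> vfeat x)^2) \<in> borel_measurable borel"
        using bounded_borel_on_power2[OF bounded_borel_on_inner_vfeat]
        unfolding bounded_borel_on_def by blast
      show "integrable (density lborel (\<lambda>x. ennreal (f x))) (\<lambda>x. (u \<bullet> vfeat x)^2)"
        by (intro integrable bounded_borel_on_power2 bounded_borel_on_inner_vfeat)
      show "c \<le> f x" if "\<bar>x\<bar> \<le> h" for x
        using that h f_ge by simp
      show "(u \<bullet> vfeat x)^2 = (u$1 + u$3*x + u$5*x^2)^2" if "0 < x" for x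
        using that by (simp add: inner_vfeat_pos)
      show "(u \<bullet> vfeat x)^2 = (u$2 + u$4*x + u$5*x^2)^2" if "x < 0" for x
        using that by (simp add: inner_vfeat_neg)
    qed (intro continuous_intros | simp)+
    also have "\<dots> = u \<bullet> (Amat M *v u)"
      unfolding M_def
      by (intro inner_Amat_eq_integral[symmetric] integrable bounded_borel_on_mult
          bounded_borel_on_vfeat_nth)
    finally show ?thesis .
  qed
  then show ?thesis using \<alpha> unfolding M_def by blast
qed

lemma Theta_bounded_borel_on:
  assumes "(\<rho>, lam, \<mu>) \<in> Theta l"
  shows "bounded_borel_on l \<rho>"
proof -
  from assms obtain \<rho>1 \<rho>2 where outside: "\<forall>x. x \<notin> {-l..l} \<longrightarrow> \<rho> x = 0"
    and deriv: "\<forall>x\<in>{-l..l}. (\<rho> has_real_derivative \<rho>1 x) (at x within {-l..l})"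
    unfolding Theta_def by auto
  have cont: "continuous_on {-l..l} \<rho>"
    using deriv by (intro DERIV_continuous_on) auto
  have "\<rho> = (\<lambda>x. indicator {-l..l} x *\<^sub>R \<rho> x)"
    using outside by (auto simp: fun_eq_iff indicator_def)
  then have "\<rho> \<in> borel_measurable borel"
    by (metis borel_measurable_continuous_on_indicator cont sets.sets_Collect_const sets_lborel
        borel_closed closed_atLeastAtMost)
  moreover obtain K where "\<forall>y\<in>\<rho> ` {-l..l}. norm y \<le> K"
    using compact_imp_bounded[OF compact_continuous_image[OF cont compact_Icc]]
    unfolding bounded_iff by auto
  then have "\<forall>x. \<bar>x\<bar> \<le> l \<longrightarrow> \<bar>\<rho> x\<bar> \<le> K"
    by (force simp: abs_le_iff)
  ultimately show ?thesis unfolding bounded_borel_on_def by auto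
qed

lemma Theta_segment:
  assumes \<theta>0: "(\<rho>0, lam0, \<mu>0) \<in> Theta l" and \<theta>1: "(\<rho>1, lam1, \<mu>1) \<in> Theta l"
    and t: "0 \<le> t" "t \<le> 1"
  shows "((\<lambda>x. \<rho>0 x + t * (\<rho>1 x - \<rho>0 x)), lam0 + t * (lam1 - lam0), \<mu>0 + t *\<^sub>R (\<mu>1 - \<mu>0))
           \<in> Theta l"
proof -
  from \<theta>0 obtain a1 a2 where outside0: "\<forall>x. x \<notin> {-l..l} \<longrightarrow> \<rho>0 x = 0"
    and deriv0: "\<forall>x\<in>{-l..l}. (\<rho>0 has_real_derivative a1 x) (at x within {-l..l}) \<and>
                             (a1 has_real_derivative a2 x) (at x within {-l..l})"
    and zero0: "\<rho>0 0 = 0" "a1 0 = 0" "a2 0 = 0" and lip0: "lam0-lipschitz_on {-l..l} a2"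
    unfolding Theta_def by auto
  from \<theta>1 obtain b1 b2 where outside1: "\<forall>x. x \<notin> {-l..l} \<longrightarrow> \<rho>1 x = 0"
    and deriv1: "\<forall>x\<in>{-l..l}. (\<rho>1 has_real_derivative b1 x) (at x within {-l..l}) \<and>
                             (b1 has_real_derivative b2 x) (at x within {-l..l})"
    and zero1: "\<rho>1 0 = 0" "b1 0 = 0" "b2 0 = 0" and lip1: "lam1-lipschitz_on {-l..l} b2"
    unfolding Theta_def by auto
  define c1 where "c1 = (\<lambda>x. (1 - t) * a1 x + t * b1 x)"
  define c2 where "c2 = (\<lambda>x. (1 - t) * a2 x + t * b2 x)"
  have deriv: "\<forall>x\<in>{-l..l}.
      ((\<lambda>x. \<rho>0 x + t * (\<rho>1 x - \<rho>0 x)) has_real_derivative c1 x) (at x within {-l..l})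
      \<and> (c1 has_real_derivative c2 x) (at x within {-l..l})"
    using deriv0 deriv1 unfolding c1_def c2_def
    by (auto intro!: derivative_eq_intros simp: algebra_simps)
  have lip: "(lam0 + t * (lam1 - lam0))-lipschitz_on {-l..l} c2"
  proof -
    have "((1 - t) * lam0 + t * lam1)-lipschitz_on {-l..l} c2"
      unfolding c2_def using t by (intro lipschitz_on_add lipschitz_on_cmult_real_nonneg lip0 lip1) auto
    moreover have "lam0 + t * (lam1 - lam0) = (1 - t) * lam0 + t * lam1"
      by (simp add: algebra_simps)
    ultimately show ?thesis by simp
  qed
  have zero: "\<rho>0 0 + t * (\<rho>1 0 - \<rho>0 0) = 0" "c1 0 = 0" "c2 0 = 0"
    using zero0 zero1 unfolding c1_def c2_def by simp_all
  show ?thesis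
    unfolding Theta_def mem_Collect_eq prod.case
    using outside0 outside1 deriv lip zero lipschitz_on_nonneg[OF lip]
    by (intro conjI exI[of _ c1] exI[of _ c2]) simp_all
qed

definition Lloss_curvature :: "real measure \<Rightarrow> nat \<Rightarrow> real \<Rightarrow> real \<Rightarrow> dualpar \<Rightarrow> real" where
  "Lloss_curvature M n s2 B \<theta> =
     1 / (4 * s2) * (\<integral>x. (Gfun \<theta> x)^2 \<partial>M) + (fst (snd \<theta>))^2 / (4 * real n * B^2)"

lemma Lloss_along_line:
  assumes "integrable M (\<lambda>x. (Gfun (\<rho>, lam, \<mu>) x)^2)"
    and "integrable M (\<lambda>x. Gfun (\<rho>, lam, \<mu>) x * Gfun (r, d, m) x)"
    and "integrable M (\<lambda>x. (Gfun (r, d, m) x)^2)"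
  shows "\<exists>D. \<forall>t. Lloss M n s2 B ((\<lambda>x. \<rho> x + t * r x), lam + t * d, \<mu> + t *\<^sub>R m)
                 = Lloss M n s2 B (\<rho>, lam, \<mu>) + t * D + t^2 * Lloss_curvature M n s2 B (r, d, m)"
proof -
  define a where "a = Gfun (\<rho>, lam, \<mu>)"
  define b where "b = Gfun (r, d, m)"
  define K where "K = 4 * real n * B^2"
  define D where "D = 1 / (4 * s2) * (2 * (\<integral>x. a x * b x \<partial>M)) + 2 * lam * d / K + (m$1 - m$2) / real n"
  have "Lloss M n s2 B ((\<lambda>x. \<rho> x + t * r x), lam + t * d, \<mu> + t *\<^sub>R m)
        = Lloss M n s2 B (\<rho>, lam, \<mu>) + t * D + t^2 * Lloss_curvature M n s2 B (r, d, m)" for t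
  proof -
    have "(\<integral>x. (Gfun ((\<lambda>x. \<rho> x + t * r x), lam + t * d, \<mu> + t *\<^sub>R m) x)^2 \<partial>M)
        = (\<integral>x. (a x)^2 + (2 * t) * (a x * b x) + t^2 * (b x)^2 \<partial>M)"
      by (intro Bochner_Integration.integral_cong)
         (simp_all add: a_def b_def Gfun_def inner_add_left power2_eq_square algebra_simps)
    also have "\<dots> = (\<integral>x. (a x)^2 \<partial>M) + t * (2 * (\<integral>x. a x * b x \<partial>M)) + t^2 * (\<integral>x. (b x)^2 \<partial>M)"
      using assms unfolding a_def b_def by simp
    finally have integral_line: "(\<integral>x. (Gfun ((\<lambda>x. \<rho> x + t * r x), lam + t * d, \<mu> + t *\<^sub>R m) x)^2 \<partial>M)
        = (\<integral>x. (a x)^2 \<partial>M) + t * (2 * (\<integral>x. a x * b x \<partial>M)) + t^2 * (\<integral>x. (b x)^2 \<partial>M)" .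
    have "(lam + t * d)^2 / K = lam^2 / K + t * (2 * lam * d / K) + t^2 * (d^2 / K)"
      by (simp add: divide_inverse power2_eq_square algebra_simps)
    moreover have "((\<mu> + t *\<^sub>R m)$1 - (\<mu> + t *\<^sub>R m)$2) / real n
        = (\<mu>$1 - \<mu>$2) / real n + t * ((m$1 - m$2) / real n)"
      by (simp add: divide_inverse algebra_simps)
    ultimately show ?thesis
      unfolding Lloss_def Lloss_curvature_def fst_conv snd_conv integral_line
      unfolding a_def b_def K_def D_def by (simp add: algebra_simps)
  qed
  then show ?thesis by blast
qed

lemma linear_coeff_nonneg:
  fixes D Q :: real
  assumes Q: "0 \<le> Q" and nonneg: "\<And>t. 0 < t \<Longrightarrow> t \<le> 1 \<Longrightarrow> 0 \<le> t * D + t^2 * Q"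
  shows "0 \<le> D"
proof (rule ccontr)
  assume D: "\<not> 0 \<le> D"
  define t where "t = (if Q = 0 then 1 else min 1 (- D / (2 * Q)))"
  have t: "0 < t" "t \<le> 1" "t * Q \<le> - D / 2"
    using D Q unfolding t_def by (auto simp: min_def field_simps)
  have "t * D + t^2 * Q = t * (D + t * Q)"
    by (simp add: power2_eq_square algebra_simps)
  also have "\<dots> < 0"
    using t D by (intro mult_pos_neg) auto
  finally show False using nonneg[OF t(1,2)] by simp
qed

lemma Lloss_excess_ge_curvature:
  assumes integrable: "\<And>\<phi>. bounded_borel_on l \<phi> \<Longrightarrow> integrable M \<phi>"
    and s2: "0 \<le> s2"
    and \<theta>s: "(\<rho>s, lams, \<mu>s) \<in> Theta l"
    and min: "\<forall>\<theta>\<in>Theta l. Lloss M n s2 B (\<rho>s, lams, \<mu>s) \<le> Lloss M n s2 B \<theta>"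
    and \<theta>: "(\<rho>, lam1, \<mu>) \<in> Theta l"
  shows "Lloss_curvature M n s2 B ((\<lambda>x. \<rho> x - \<rho>s x), lam1 - lams, \<mu> - \<mu>s)
         \<le> Lloss M n s2 B (\<rho>, lam1, \<mu>) - Lloss M n s2 B (\<rho>s, lams, \<mu>s)"
proof -
  let ?\<delta> = "((\<lambda>x. \<rho> x - \<rho>s x), lam1 - lams, \<mu> - \<mu>s)"
  let ?C = "Lloss_curvature M n s2 B ?\<delta>"
  have G: "bounded_borel_on l (Gfun (\<rho>s, lams, \<mu>s))" "bounded_borel_on l (Gfun ?\<delta>)"
    unfolding Gfun_def fst_conv snd_conv
    by (intro bounded_borel_on_add bounded_borel_on_diff bounded_borel_on_inner_vfeat
        Theta_bounded_borel_on[OF \<theta>s] Theta_bounded_borel_on[OF \<theta>])+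
  have "\<exists>D. \<forall>t. Lloss M n s2 B ((\<lambda>x. \<rho>s x + t * (\<rho> x - \<rho>s x)), lams + t * (lam1 - lams),
                                \<mu>s + t *\<^sub>R (\<mu> - \<mu>s))
                     = Lloss M n s2 B (\<rho>s, lams, \<mu>s) + t * D + t^2 * ?C"
    by (rule Lloss_along_line; intro integrable bounded_borel_on_power2 bounded_borel_on_mult G)
  then obtain D where line: "\<And>t. Lloss M n s2 B ((\<lambda>x. \<rho>s x + t * (\<rho> x - \<rho>s x)),
      lams + t * (lam1 - lams), \<mu>s + t *\<^sub>R (\<mu> - \<mu>s)) = Lloss M n s2 B (\<rho>s, lams, \<mu>s) + t * D + t^2 * ?C"
    by blast
  have C: "0 \<le> ?C"
    using s2 unfolding Lloss_curvature_def by (simp add: integral_nonneg_AE)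
  have "0 \<le> t * D + t^2 * ?C" if "0 < t" "t \<le> 1" for t
  proof -
    have "Lloss M n s2 B (\<rho>s, lams, \<mu>s) \<le> Lloss M n s2 B ((\<lambda>x. \<rho>s x + t * (\<rho> x - \<rho>s x)),
        lams + t * (lam1 - lams), \<mu>s + t *\<^sub>R (\<mu> - \<mu>s))"
      using min Theta_segment[OF \<theta>s \<theta>, of t] that by simp
    then show ?thesis unfolding line by simp
  qed
  then have "0 \<le> D" by (rule linear_coeff_nonneg[OF C])
  moreover have "Lloss M n s2 B (\<rho>, lam1, \<mu>) = Lloss M n s2 B (\<rho>s, lams, \<mu>s) + D + ?C"
    using line[of 1] by simp
  ultimately show ?thesis by simp
qed

lemma integral_square_sum_ge:
  fixes r w :: "'a \<Rightarrow> real"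
  assumes int: "integrable M (\<lambda>x. (r x)^2)" "integrable M (\<lambda>x. r x * w x)"
      "integrable M (\<lambda>x. (w x)^2)"
    and \<alpha>: "\<alpha> \<le> 1" and w: "\<alpha> * C \<le> (\<integral>x. (w x)^2 \<partial>M)"
  shows "\<alpha> * ((\<integral>x. (r x)^2 \<partial>M) + C) - 2 * (\<integral>x. \<bar>r x * w x\<bar> \<partial>M)
         \<le> (\<integral>x. (r x + w x)^2 \<partial>M)"
proof -
  have "(\<integral>x. (r x + w x)^2 \<partial>M) = (\<integral>x. (r x)^2 + 2 * (r x * w x) + (w x)^2 \<partial>M)"
    by (intro Bochner_Integration.integral_cong) (simp_all add: power2_eq_square algebra_simps)
  also have "\<dots> = (\<integral>x. (r x)^2 \<partial>M) + 2 * (\<integral>x. r x * w x \<partial>M) + (\<integral>x. (w x)^2 \<partial>M)"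
    using int by simp
  finally have expand: "(\<integral>x. (r x + w x)^2 \<partial>M)
      = (\<integral>x. (r x)^2 \<partial>M) + 2 * (\<integral>x. r x * w x \<partial>M) + (\<integral>x. (w x)^2 \<partial>M)" .
  have "\<bar>\<integral>x. r x * w x \<partial>M\<bar> \<le> (\<integral>x. \<bar>r x * w x\<bar> \<partial>M)"
    by (rule integral_abs_bound)
  moreover have "\<alpha> * (\<integral>x. (r x)^2 \<partial>M) \<le> (\<integral>x. (r x)^2 \<partial>M)"
    using mult_right_mono[OF \<alpha>, of "\<integral>x. (r x)^2 \<partial>M"] by (simp add: integral_nonneg_AE)
  ultimately show ?thesis
    unfolding expand using w by (simp add: algebra_simps abs_le_iff)
qed

lemma Lloss_curvature_ge:
  fixes r :: "real \<Rightarrow> real" and m :: "real^5"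
  assumes integrable: "\<And>\<phi>. bounded_borel_on l \<phi> \<Longrightarrow> integrable M \<phi>"
    and r: "bounded_borel_on l r" and s2: "0 < s2"
    and \<alpha>: "\<alpha> \<le> 1" and coercive: "\<forall>u. \<alpha> * (norm u)^2 \<le> u \<bullet> (Amat M *v u)"
  shows "\<alpha> / (4 * s2) * ((\<integral>x. (r x)^2 \<partial>M) + (norm m)^2) + d^2 / (4 * real n * B^2)
           - 1 / (2 * s2) * (\<integral>x. \<bar>r x * (m \<bullet> vfeat x)\<bar> \<partial>M)
         \<le> Lloss_curvature M n s2 B (r, d, m)"
proof -
  have "\<alpha> * (norm m)^2 \<le> m \<bullet> (Amat M *v m)"
    using coercive by blast
  also have "\<dots> = (\<integral>x. (m \<bullet> vfeat x)^2 \<partial>M)"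
    by (intro inner_Amat_eq_integral integrable bounded_borel_on_mult bounded_borel_on_vfeat_nth)
  finally have coercive_m: "\<alpha> * (norm m)^2 \<le> (\<integral>x. (m \<bullet> vfeat x)^2 \<partial>M)" .
  have "\<alpha> * ((\<integral>x. (r x)^2 \<partial>M) + (norm m)^2) - 2 * (\<integral>x. \<bar>r x * (m \<bullet> vfeat x)\<bar> \<partial>M)
      \<le> (\<integral>x. (r x + m \<bullet> vfeat x)^2 \<partial>M)"
    by (rule integral_square_sum_ge[OF _ _ _ \<alpha> coercive_m];
        intro integrable bounded_borel_on_power2 bounded_borel_on_mult r bounded_borel_on_inner_vfeat)
  then have "1 / (4 * s2) * (\<alpha> * ((\<integral>x. (r x)^2 \<partial>M) + (norm m)^2)
        - 2 * (\<integral>x. \<bar>r x * (m \<bullet> vfeat x)\<bar> \<partial>M))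
      \<le> 1 / (4 * s2) * (\<integral>x. (r x + m \<bullet> vfeat x)^2 \<partial>M)"
    using s2 by (intro mult_left_mono) auto
  moreover have "1 / (4 * s2) * (\<alpha> * X - 2 * Y) = \<alpha> / (4 * s2) * X - 1 / (2 * s2) * Y" for X Y
    using s2 by (simp add: field_simps)
  ultimately show ?thesis
    unfolding Lloss_curvature_def Gfun_def fst_conv snd_conv by simp
qed

theorem lemma4:
  fixes l :: real and f :: "real \<Rightarrow> real"
  assumes l_pos: "l > 0"
    and f_meas: "f \<in> borel_measurable borel"
    and f_nonneg: "\<And>x. f x \<ge> 0"
    and prob: "prob_space (density lborel (\<lambda>x. ennreal (f x)))"
    and supp: "AE x in density lborel (\<lambda>x. ennreal (f x)). \<bar>x\<bar> \<le> l"
    and pos_at_0: "\<exists>\<delta>>0. \<exists>c>0. \<forall>x. \<bar>x\<bar> < \<delta> \<longrightarrow> f x \<ge> c"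
  defines "M \<equiv> density lborel (\<lambda>x. ennreal (f x))"
  shows "\<exists>\<alpha>. 0 < \<alpha> \<and> \<alpha> \<le> 1 \<and>
    (\<forall>u :: real ^ 5. u \<bullet> (Amat M *v u) \<ge> \<alpha> * (norm u)^2) \<and>
    (\<forall>(s2::real) (B::real) (n::nat) \<rho>s lams \<mu>s.
       s2 > 0 \<longrightarrow> B > 0 \<longrightarrow> n > 0 \<longrightarrow>
       (\<rho>s, lams, \<mu>s) \<in> Theta l \<longrightarrow>
       (\<forall>\<theta>\<in>Theta l. Lloss M n s2 B (\<rho>s, lams, \<mu>s) \<le> Lloss M n s2 B \<theta>) \<longrightarrow>
       (\<forall>\<rho> lam1 \<mu>. (\<rho>, lam1, \<mu>) \<in> Theta l \<longrightarrow>
          Lloss M n s2 B (\<rho>, lam1, \<mu>) - Lloss M n s2 B (\<rho>s, lams, \<mu>s)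
            \<ge> 1 / (4 * s2) * (\<integral>x. (\<rho> x - \<rho>s x + (\<mu> - \<mu>s) \<bullet> vfeat x)^2 \<partial>M)
              + (lam1 - lams)^2 / (4 * real n * B^2)
          \<and>
          1 / (4 * s2) * (\<integral>x. (\<rho> x - \<rho>s x + (\<mu> - \<mu>s) \<bullet> vfeat x)^2 \<partial>M)
              + (lam1 - lams)^2 / (4 * real n * B^2)
            \<ge> \<alpha> / (4 * s2) * ((\<integral>x. (\<rho> x - \<rho>s x)^2 \<partial>M) + (norm (\<mu> - \<mu>s))^2)
              + (lam1 - lams)^2 / (4 * real n * B^2)
              - 1 / (2 * s2) * (\<integral>x. \<bar>(\<rho> x - \<rho>s x) * ((\<mu> - \<mu>s) \<bullet> vfeat x)\<bar> \<partial>M)))"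
proof -
  obtain \<delta> c where \<delta>: "0 < \<delta>" and c: "0 < c" and f_ge: "\<And>x. \<bar>x\<bar> < \<delta> \<Longrightarrow> c \<le> f x"
    using pos_at_0 by blast
  have integrable: "\<And>\<phi>. bounded_borel_on l \<phi> \<Longrightarrow> integrable M \<phi>"
    unfolding M_def using prob supp
    by (intro integrable_bounded_borel_on) (auto simp: prob_space_def)
  obtain \<alpha> where \<alpha>: "0 < \<alpha>" "\<alpha> \<le> 1" and coercive: "\<forall>u. \<alpha> * (norm u)^2 \<le> u \<bullet> (Amat M *v u)"
    using Amat_coercive[OF f_meas f_nonneg integrable[unfolded M_def] \<delta> c f_ge] unfolding M_def by blast
  show ?thesis
  proof (intro exI[of _ \<alpha>] conjI allI impI)
    fix s2 B :: real and n :: nat and \<rho>s \<rho> :: "real \<Rightarrow> real" and lams lam1 :: real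
      and \<mu>s \<mu> :: "real^5"
    assume s2: "s2 > 0" and "B > 0" "n > 0" and \<theta>s: "(\<rho>s, lams, \<mu>s) \<in> Theta l"
      and min: "\<forall>\<theta>\<in>Theta l. Lloss M n s2 B (\<rho>s, lams, \<mu>s) \<le> Lloss M n s2 B \<theta>"
      and \<theta>: "(\<rho>, lam1, \<mu>) \<in> Theta l"
    show "Lloss M n s2 B (\<rho>, lam1, \<mu>) - Lloss M n s2 B (\<rho>s, lams, \<mu>s)
        \<ge> 1 / (4 * s2) * (\<integral>x. (\<rho> x - \<rho>s x + (\<mu> - \<mu>s) \<bullet> vfeat x)^2 \<partial>M)
          + (lam1 - lams)^2 / (4 * real n * B^2)"
      using Lloss_excess_ge_curvature[OF integrable less_imp_le[OF s2] \<theta>s min \<theta>]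
      unfolding Lloss_curvature_def Gfun_def fst_conv snd_conv by simp
    show "1 / (4 * s2) * (\<integral>x. (\<rho> x - \<rho>s x + (\<mu> - \<mu>s) \<bullet> vfeat x)^2 \<partial>M)
          + (lam1 - lams)^2 / (4 * real n * B^2)
        \<ge> \<alpha> / (4 * s2) * ((\<integral>x. (\<rho> x - \<rho>s x)^2 \<partial>M) + (norm (\<mu> - \<mu>s))^2)
          + (lam1 - lams)^2 / (4 * real n * B^2)
          - 1 / (2 * s2) * (\<integral>x. \<bar>(\<rho> x - \<rho>s x) * ((\<mu> - \<mu>s) \<bullet> vfeat x)\<bar> \<partial>M)"
      using Lloss_curvature_ge[OF integrable bounded_borel_on_diff[OF Theta_bounded_borel_on[OF \<theta>]
          Theta_bounded_borel_on[OF \<theta>s]] s2 \<alpha>(2) coercive]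
      unfolding Lloss_curvature_def Gfun_def fst_conv snd_conv by simp
  qed (use \<alpha> coercive in auto)
qed

end
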